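(* A set $\mathcal{K}\subseteq\wp(\mathcal{G})$ is coherent if and only if there is a non-empty set $\mathfrak{D}$ whose members are non-empty sets of coherent sets of desirable gambles, such that $\mathfrak{D}$ has the finite intersection property (there are no $\mathbb{D}_1,\ldots,\mathbb{D}_n\in\mathfrak{D}$ with $\mathbb{D}_1\cap\cdots\cap\mathbb{D}_n=\emptyset$), and for all $B\subseteq\mathcal{G}$: $B\in\mathcal{K}$ iff there are finitely many $\mathbb{D}_1,\ldots,\mathbb{D}_n\in\mathfrak{D}$ such that $B\cap D\neq\emptyset$ for every $D\in\mathbb{D}_1\cap\cdots\cap\mathbb{D}_n$.
   Context: $\Omega$ is a non-empty set and $\mathcal{G}$ is the set of bounded functions $\Omega\to\mathbb{R}$. $f\geq g$ means pointwise $\geq$; $f\gneq g$ means $f\geq g$ and $f\neq g$; $\mathcal{G}_{\gneq 0}=\{f: f\gneq 0\}$. $\mathrm{posi}(B)=\{\sum_{i=1}^m\lambda_i h_i: m\geq1,\lambda_i>0,h_i\in B\}$. A set $D\subseteq\mathcal{G}$ is coherent if $0\notin D$; $\mathcal{G}_{\gneq0}\subseteq D$; $\lambda g\in D$ whenever $g\in D,\lambda>0$; and $f+g\in D$ whenever $f,g\in D$. A set $\mathcal{K}\subseteq\wp(\mathcal{G})$ is coherent if: (K$_\emptyset$) $\emptyset\notin\mathcal{K}$; (K$_0$) if $A\in\mathcal{K}$ then $A\setminus\{0\}\in\mathcal{K}$; (K$_{\gneq0}$) if $g\in\mathcal{G}_{\gneq0}$ then $\{g\}\in\mathcal{K}$;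 (K$_\supseteq$) if $A\in\mathcal{K}$ and $B\supseteq A$ then $B\in\mathcal{K}$; (K$_{\mathrm{Dom}}$) if $A\in\mathcal{K}$ and for each $g\in A$, $f_g$ is a gamble with $f_g\geq g$, then $\{f_g: g\in A\}\in\mathcal{K}$; (K$_{\mathrm{Add}}$) if $A_1,\ldots,A_n\in\mathcal{K}$ (finitely many) and for each $\langle g_1,\ldots,g_n\rangle\in A_1\times\cdots\times A_n$, $f_{\langle g_1,\ldots,g_n\rangle}$ is some member of $\mathrm{posi}(\{g_1,\ldots,g_n\})$, then $\{f_{\langle g_1,\ldots,g_n\rangle}:\langle g_1,\ldots,g_n\rangle\in A_1\times\cdots\times A_n\}\in\mathcal{K}$. *)

theory Defs
  imports Complex_Main "HOL-Library.FuncSet"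
begin

definition gambles :: "('w \<Rightarrow> real) set" where
  "gambles = {f. \<exists>c. \<forall>w. \<bar>f w\<bar> \<le> c}"

definition posgambles :: "('w \<Rightarrow> real) set" where
  "posgambles = {f \<in> gambles. (\<forall>w. f w \<ge> 0) \<and> (\<exists>w. f w \<noteq> 0)}"

definition posi :: "('w \<Rightarrow> real) set \<Rightarrow> ('w \<Rightarrow> real) set" where
  "posi B = {f. \<exists>(m::nat) (lam::nat \<Rightarrow> real) (h::nat \<Rightarrow> 'w \<Rightarrow> real).
      m \<ge> 1 \<and> (\<forall>i<m. lam i > 0 \<and> h i \<in> B) \<and> f = (\<lambda>w. \<Sum>i<m. lam i * h i w)}"

definition coherent_D :: "('w \<Rightarrow> real) set \<Rightarrow> bool" where
  "coherent_D D \<longleftrightarrow> D \<subseteq> gambles \<and> (\<lambda>w. 0) \<notin> D \<and> posgambles \<subseteq> D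
     \<and> (\<forall>g\<in>D. \<forall>l::real. l > 0 \<longrightarrow> (\<lambda>w. l * g w) \<in> D)
     \<and> (\<forall>f\<in>D. \<forall>g\<in>D. (\<lambda>w. f w + g w) \<in> D)"

definition coherent_K :: "('w \<Rightarrow> real) set set \<Rightarrow> bool" where
  "coherent_K K \<longleftrightarrow> K \<subseteq> Pow gambles
     \<and> {} \<notin> K
     \<and> (\<forall>A\<in>K. A - {\<lambda>w. 0} \<in> K)
     \<and> (\<forall>g\<in>posgambles. {g} \<in> K)
     \<and> (\<forall>A\<in>K. \<forall>B. A \<subseteq> B \<and> B \<subseteq> gambles \<longrightarrow> B \<in> K)
     \<and> (\<forall>A\<in>K. \<forall>F. (\<forall>g\<in>A. F g \<in> gambles \<and> (\<forall>w. F g w \<ge> g w)) \<longrightarrow> F ` A \<in> K)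
     \<and> (\<forall>(n::nat) (As::nat \<Rightarrow> ('w \<Rightarrow> real) set)
          (F::(nat \<Rightarrow> 'w \<Rightarrow> real) \<Rightarrow> 'w \<Rightarrow> real).
          (\<forall>i<n. As i \<in> K) \<and>
          (\<forall>gs \<in> PiE {..<n} As. F gs \<in> posi (gs ` {..<n}))
          \<longrightarrow> F ` (PiE {..<n} As) \<in> K)"

end

theory Submission
  imports Defs
begin

text \<open>
  For the forward direction, take for every \<open>A \<in> K\<close> the family of coherent sets of desirable
  gambles that meet \<open>A\<close>. Everything rests on a separation property: if \<open>A_1, ..., A_n \<in> K\<close> and
  \<open>B \<notin> K\<close>, some coherent \<open>D\<close> meets every \<open>A_i\<close> but misses \<open>B\<close>. Otherwise, for every selection
  \<open>g_i \<in> A_i\<close> the natural extension of \<open>{g_1, ..., g_n}\<close> is either incoherent or meets \<open>B\<close>; in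
  both cases some positive combination of the \<open>g_i\<close> is dominated by \<open>0\<close> or by an element of \<open>B\<close>,
  and the axioms (K_Add), (K_Dom), (K_0) and (K_\<supseteq>) then force \<open>B \<in> K\<close>.
  For the converse, every axiom of \<open>K\<close> is a property that holds separately in each coherent \<open>D\<close>,
  and the finite intersection property lets finitely many witnesses be combined.
\<close>

lemma zero_in_gambles: "(\<lambda>w. 0) \<in> gambles"
  by (auto simp: gambles_def)

lemma gambles_add: "f \<in> gambles \<Longrightarrow> g \<in> gambles \<Longrightarrow> (\<lambda>w. f w + g w) \<in> gambles"
proof -
  assume "f \<in> gambles" "g \<in> gambles"
  then obtain c d where "\<forall>w. \<bar>f w\<bar> \<le> c" "\<forall>w. \<bar>g w\<bar> \<le> d"
    by (auto simp: gambles_def)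
  then have "\<forall>w. \<bar>f w + g w\<bar> \<le> c + d"
    by (meson abs_triangle_ineq add_mono order_trans)
  then show ?thesis by (auto simp: gambles_def)
qed

lemma gambles_scale: "f \<in> gambles \<Longrightarrow> (\<lambda>w. c * f w) \<in> gambles"
proof -
  assume "f \<in> gambles"
  then obtain d where "\<forall>w. \<bar>f w\<bar> \<le> d" by (auto simp: gambles_def)
  then have "\<forall>w. \<bar>c * f w\<bar> \<le> \<bar>c\<bar> * d"
    by (simp add: abs_mult mult_left_mono)
  then show ?thesis by (auto simp: gambles_def)
qed

lemma gambles_diff: "f \<in> gambles \<Longrightarrow> g \<in> gambles \<Longrightarrow> (\<lambda>w. f w - g w) \<in> gambles"
  using gambles_add[of f "\<lambda>w. (-1) * g w"] gambles_scale[of g "-1"] by simp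

lemma gambles_sum:
  "finite I \<Longrightarrow> \<forall>i\<in>I. h i \<in> gambles \<Longrightarrow> (\<lambda>w. \<Sum>i\<in>I. c i * h i w) \<in> gambles"
proof (induction I rule: finite_induct)
  case empty
  then show ?case by (simp add: zero_in_gambles)
next
  case (insert x F)
  then show ?case using gambles_add[OF gambles_scale[of "h x" "c x"]] by simp
qed

lemma one_in_posgambles: "(\<lambda>w. 1) \<in> posgambles"
  by (auto simp: posgambles_def gambles_def)

lemma zero_notin_posgambles: "(\<lambda>w. 0) \<notin> posgambles"
  by (simp add: posgambles_def)

lemma scaled_in_posi: "l > 0 \<Longrightarrow> h \<in> B \<Longrightarrow> (\<lambda>w. l * h w) \<in> posi B"
  unfolding posi_def by (auto intro!: exI[of _ 1] exI[of _ "\<lambda>_. l"] exI[of _ "\<lambda>_. h"])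

lemma posi_add: "f \<in> posi B \<Longrightarrow> g \<in> posi B \<Longrightarrow> (\<lambda>w. f w + g w) \<in> posi B"
proof -
  assume "f \<in> posi B" "g \<in> posi B"
  then obtain m1 l1 h1 m2 l2 h2 where
    f: "(m1::nat) \<ge> 1" "\<forall>i<m1. l1 i > 0 \<and> h1 i \<in> B" "f = (\<lambda>w. \<Sum>i<m1. l1 i * h1 i w)" and
    g: "(m2::nat) \<ge> 1" "\<forall>i<m2. l2 i > 0 \<and> h2 i \<in> B" "g = (\<lambda>w. \<Sum>i<m2. l2 i * h2 i w)"
    unfolding posi_def by blast
  define l where "l i = (if i < m1 then l1 i else l2 (i - m1))" for i
  define h where "h i = (if i < m1 then h1 i else h2 (i - m1))" for i
  have split: "(\<Sum>i<m1 + k. u i) = (\<Sum>i<m1. u i) + (\<Sum>i<k. u (i + m1))" for k and u :: "nat \<Rightarrow> real"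
    by (induction k) (simp_all add: algebra_simps)
  have "\<forall>i<m1 + m2. l i > 0 \<and> h i \<in> B"
    using f g by (auto simp: l_def h_def)
  moreover have "(\<lambda>w. f w + g w) = (\<lambda>w. \<Sum>i<m1 + m2. l i * h i w)"
    by (simp add: split f g l_def h_def)
  ultimately show ?thesis
    unfolding posi_def using f by (auto intro!: exI[of _ "m1 + m2"])
qed

lemma sum_in_posi:
  "finite I \<Longrightarrow> I \<noteq> {} \<Longrightarrow> \<forall>i\<in>I. lam i > 0 \<and> h i \<in> B
    \<Longrightarrow> (\<lambda>w. \<Sum>i\<in>I. lam i * h i w) \<in> posi B"
proof (induction I rule: finite_ne_induct)
  case (singleton x)
  then show ?case by (simp add: scaled_in_posi)
next
  case (insert x F)
  then show ?case using posi_add[OF scaled_in_posi[of "lam x" "h x" B]] by simp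
qed

lemma posi_subset_gambles: "B \<subseteq> gambles \<Longrightarrow> posi B \<subseteq> gambles"
  unfolding posi_def using gambles_sum[of "{..<_}"] by blast

lemma posgambles_subset_coherent_D: "coherent_D D \<Longrightarrow> posgambles \<subseteq> D"
  by (simp add: coherent_D_def)

lemma coherent_D_add: "coherent_D D \<Longrightarrow> f \<in> D \<Longrightarrow> g \<in> D \<Longrightarrow> (\<lambda>w. f w + g w) \<in> D"
  by (simp add: coherent_D_def)

lemma coherent_D_scale: "coherent_D D \<Longrightarrow> l > 0 \<Longrightarrow> g \<in> D \<Longrightarrow> (\<lambda>w. l * g w) \<in> D"
  by (simp add: coherent_D_def)

lemma coherent_D_sum:
  assumes "coherent_D D"
  shows "finite I \<Longrightarrow> I \<noteq> {} \<Longrightarrow> \<forall>i\<in>I. lam i > 0 \<and> h i \<in> D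
    \<Longrightarrow> (\<lambda>w. \<Sum>i\<in>I. lam i * h i w) \<in> D"
proof (induction I rule: finite_ne_induct)
  case (singleton x)
  then show ?case using coherent_D_scale[OF assms] by simp
next
  case (insert x F)
  then show ?case using coherent_D_add[OF assms coherent_D_scale[OF assms]] by simp
qed

lemma posi_subset_coherent_D:
  assumes "coherent_D D" "B \<subseteq> D"
  shows "posi B \<subseteq> D"
proof
  fix f assume "f \<in> posi B"
  then obtain m :: nat and lam h where "m \<ge> 1" "\<forall>i<m. lam i > 0 \<and> h i \<in> B" "f = (\<lambda>w. \<Sum>i<m. lam i * h i w)"
    unfolding posi_def by blast
  moreover from \<open>m \<ge> 1\<close> have "{..<m} \<noteq> {}" by (simp add: lessThan_empty_iff)
  ultimately show "f \<in> D"
    using coherent_D_sum[OF assms(1) finite_lessThan, of m lam h] assms(2) by auto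
qed

lemma coherent_D_upward:
  assumes D: "coherent_D D" and "g \<in> D" "f \<in> gambles" "\<forall>w. g w \<le> f w"
  shows "f \<in> D"
proof (cases "f = g")
  case False
  have "g \<in> gambles" using D \<open>g \<in> D\<close> by (auto simp: coherent_D_def)
  then have "(\<lambda>w. f w - g w) \<in> posgambles"
    using assms False gambles_diff[of f g] by (auto simp: posgambles_def fun_eq_iff)
  then have "(\<lambda>w. f w - g w) \<in> D"
    using posgambles_subset_coherent_D[OF D] by blast
  then have "(\<lambda>w. g w + (f w - g w)) \<in> D"
    by (rule coherent_D_add[OF D \<open>g \<in> D\<close>])
  then show ?thesis by simp
qed (use \<open>g \<in> D\<close> in simp)

lemma coherent_D_meets_posi_selection:
  fixes n :: nat
  assumes "coherent_D D" "\<forall>i<n. As i \<inter> D \<noteq> {}"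
    "\<forall>gs\<in>PiE {..<n} As. F gs \<in> posi (gs ` {..<n})"
  shows "F ` PiE {..<n} As \<inter> D \<noteq> {}"
proof -
  obtain g where g: "\<forall>i\<in>{..<n}. g i \<in> As i \<inter> D"
    using bchoice[of "{..<n}" "\<lambda>i x. x \<in> As i \<inter> D"] assms(2) by blast
  then have "restrict g {..<n} \<in> PiE {..<n} As" and "restrict g {..<n} ` {..<n} \<subseteq> D"
    by auto
  then show ?thesis using assms(3) posi_subset_coherent_D[OF assms(1)] by blast
qed

text \<open>The natural extension \<open>posi({g_0, ..., g_(n-1)} \<union> G_\<gneq>0)\<close> of finitely many gambles, written as
  a cone combination plus a nonnegative gamble.\<close>

definition natext :: "(nat \<Rightarrow> 'w \<Rightarrow> real) \<Rightarrow> nat \<Rightarrow> ('w \<Rightarrow> real) set" where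
  "natext g n = {h. \<exists>mu p. (\<forall>i<n. mu i \<ge> (0::real)) \<and> p \<in> gambles \<and> (\<forall>w. p w \<ge> 0)
      \<and> ((\<exists>i<n. mu i > 0) \<or> (\<exists>w. p w \<noteq> 0)) \<and> h = (\<lambda>w. (\<Sum>i<n. mu i * g i w) + p w)}"

lemma generator_in_natext:
  assumes "i < n"
  shows "g i \<in> natext g n"
proof -
  define mu :: "nat \<Rightarrow> real" where "mu j = (if j = i then 1 else 0)" for j
  have "g i = (\<lambda>w. (\<Sum>j<n. mu j * g j w) + 0)"
    using assms by (simp add: mu_def if_distrib[of "\<lambda>x. x * _"] cong: if_cong)
  moreover have "\<exists>j<n. mu j > 0" using assms by (auto simp: mu_def)
  ultimately show ?thesis
    unfolding natext_def using zero_in_gambles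
    by (intro CollectI exI[of _ mu] exI[of _ "\<lambda>w. 0"]) (auto simp: mu_def)
qed

lemma coherent_natext:
  fixes g :: "nat \<Rightarrow> 'w \<Rightarrow> real"
  assumes g: "\<forall>i<n. g i \<in> gambles" and zero: "(\<lambda>w. 0) \<notin> natext g n"
  shows "coherent_D (natext g n)"
  unfolding coherent_D_def
proof (intro conjI ballI allI impI)
  show "natext g n \<subseteq> gambles"
  proof
    fix h assume "h \<in> natext g n"
    then obtain mu p where "p \<in> gambles" "h = (\<lambda>w. (\<Sum>i<n. mu i * g i w) + p w)"
      unfolding natext_def by blast
    then show "h \<in> gambles"
      using gambles_add[OF gambles_sum[of "{..<n}" g mu]] g by simp
  qed
  show "(\<lambda>w. 0) \<notin> natext g n" by (rule zero)
  show "posgambles \<subseteq> natext g n"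
  proof
    fix f :: "'w \<Rightarrow> real"
    assume "f \<in> posgambles"
    then show "f \<in> natext g n"
      unfolding natext_def posgambles_def by (auto intro!: exI[of _ "\<lambda>j::nat. 0::real"] exI[of _ f])
  qed
next
  fix h and l :: real
  assume "h \<in> natext g n" "l > 0"
  then obtain mu p where "\<forall>i<n. mu i \<ge> 0" "p \<in> gambles" "\<forall>w. p w \<ge> 0"
      "(\<exists>i<n. mu i > 0) \<or> (\<exists>w. p w \<noteq> 0)" "h = (\<lambda>w. (\<Sum>i<n. mu i * g i w) + p w)"
    unfolding natext_def by blast
  with \<open>l > 0\<close> show "(\<lambda>w. l * h w) \<in> natext g n"
    unfolding natext_def
    by (auto simp: gambles_scale distrib_left sum_distrib_left mult.assoc
        intro!: exI[of _ "\<lambda>i. l * mu i"] exI[of _ "\<lambda>w. l * p w"])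
next
  fix f h
  assume "f \<in> natext g n" "h \<in> natext g n"
  then obtain mu p mu' p' where
    f: "\<forall>i<n. mu i \<ge> 0" "p \<in> gambles" "\<forall>w. p w \<ge> 0"
      "(\<exists>i<n. mu i > 0) \<or> (\<exists>w. p w \<noteq> 0)" "f = (\<lambda>w. (\<Sum>i<n. mu i * g i w) + p w)" and
    h: "\<forall>i<n. mu' i \<ge> 0" "p' \<in> gambles" "\<forall>w. p' w \<ge> 0"
      "(\<exists>i<n. mu' i > 0) \<or> (\<exists>w. p' w \<noteq> 0)" "h = (\<lambda>w. (\<Sum>i<n. mu' i * g i w) + p' w)"
    unfolding natext_def by blast
  have sum: "(\<lambda>w. f w + h w) = (\<lambda>w. (\<Sum>i<n. (mu i + mu' i) * g i w) + (p w + p' w))"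
    using f h by (auto simp: distrib_right sum.distrib)
  have "(\<exists>i<n. mu i + mu' i > 0) \<or> (\<exists>w. p w + p' w \<noteq> 0)"
    using f(1,3,4) h(1,3,4) by (smt (verit))
  then show "(\<lambda>w. f w + h w) \<in> natext g n"
    unfolding natext_def sum using f h gambles_add[OF f(2) h(2)]
    by (auto intro!: exI[of _ "\<lambda>i. mu i + mu' i"] add_nonneg_nonneg)
qed

text \<open>The witness is the cone part of \<open>h\<close> restricted to its positive coefficients; \<open>h \<notin> posgambles\<close>
  guarantees that there is at least one.\<close>

lemma natext_dominates_posi:
  assumes "h \<in> natext g n" and "h \<notin> posgambles"
  shows "\<exists>a\<in>posi (g ` {..<n}). \<forall>w. a w \<le> h w"
proof -
  obtain mu p where mu: "\<forall>i<n. mu i \<ge> 0" and p: "p \<in> gambles" "\<forall>w. p w \<ge> 0"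
    and pos: "(\<exists>i<n. mu i > 0) \<or> (\<exists>w. p w \<noteq> 0)" and h: "h = (\<lambda>w. (\<Sum>i<n. mu i * g i w) + p w)"
    using assms(1) unfolding natext_def by blast
  define S where "S = {i. i < n \<and> mu i > 0}"
  have "S \<noteq> {}"
  proof
    assume "S = {}"
    then have "\<forall>i<n. mu i = 0" using mu by (force simp: S_def)
    then have "h = p" and "\<exists>w. p w \<noteq> 0" using h pos by auto
    then show False using assms(2) p by (simp add: posgambles_def)
  qed
  then have "(\<lambda>w. \<Sum>i\<in>S. mu i * g i w) \<in> posi (g ` {..<n})"
    by (intro sum_in_posi) (auto simp: S_def)
  moreover have "(\<Sum>i\<in>S. mu i * g i w) \<le> h w" for w
  proof -
    have "(\<Sum>i\<in>S. mu i * g i w) = (\<Sum>i<n. mu i * g i w)"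
      by (rule sum.mono_neutral_left) (use mu in \<open>auto simp: S_def\<close>)
    then show ?thesis using h p(2) by simp
  qed
  ultimately show ?thesis by (auto intro!: bexI[of _ "\<lambda>w. \<Sum>i\<in>S. mu i * g i w"])
qed

subsection \<open>Coherent sets of desirable gamble sets\<close>

context
  fixes K :: "('w \<Rightarrow> real) set set"
  assumes K: "coherent_K K"
begin

lemma coherent_K_subset_gambles: "A \<in> K \<Longrightarrow> A \<subseteq> gambles"
  using K by (auto simp: coherent_K_def)

lemma coherent_K_empty: "{} \<notin> K"
  using K by (simp add: coherent_K_def)

lemma coherent_K_remove_zero: "A \<in> K \<Longrightarrow> A - {\<lambda>w. 0} \<in> K"
  using K by (simp add: coherent_K_def)

lemma coherent_K_posgamble: "g \<in> posgambles \<Longrightarrow> {g} \<in> K"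
  using K by (simp add: coherent_K_def)

lemma coherent_K_superset:
  assumes "A \<in> K" "A \<subseteq> B" "B \<subseteq> gambles"
  shows "B \<in> K"
proof -
  have "\<forall>A\<in>K. \<forall>B. A \<subseteq> B \<and> B \<subseteq> gambles \<longrightarrow> B \<in> K"
    using K unfolding coherent_K_def by (elim conjE) assumption
  then show ?thesis using assms by blast
qed

lemma coherent_K_dominate:
  assumes "A \<in> K" "\<forall>g\<in>A. F g \<in> gambles \<and> (\<forall>w. F g w \<ge> g w)"
  shows "F ` A \<in> K"
proof -
  have "\<forall>A\<in>K. \<forall>F. (\<forall>g\<in>A. F g \<in> gambles \<and> (\<forall>w. F g w \<ge> g w)) \<longrightarrow> F ` A \<in> K"
    using K unfolding coherent_K_def by (elim conjE) assumption
  then show ?thesis using assms by blast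
qed

lemma coherent_K_posi_selection:
  fixes n :: nat
  assumes "\<forall>i<n. As i \<in> K" "\<forall>gs\<in>PiE {..<n} As. F gs \<in> posi (gs ` {..<n})"
  shows "F ` PiE {..<n} As \<in> K"
proof -
  have "\<forall>(n::nat) (As::nat \<Rightarrow> ('w \<Rightarrow> real) set) (F::(nat \<Rightarrow> 'w \<Rightarrow> real) \<Rightarrow> 'w \<Rightarrow> real).
      (\<forall>i<n. As i \<in> K) \<and> (\<forall>gs \<in> PiE {..<n} As. F gs \<in> posi (gs ` {..<n}))
      \<longrightarrow> F ` (PiE {..<n} As) \<in> K"
    using K unfolding coherent_K_def by (elim conjE) assumption
  then show ?thesis using assms by blast
qed

lemma coherent_K_mem_if_posi_dominated:
  fixes n :: nat
  assumes As: "\<forall>i<n. As i \<in> K" and B: "B \<subseteq> gambles"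
    and dom: "\<forall>gs\<in>PiE {..<n} As. \<exists>a\<in>posi (gs ` {..<n}). \<exists>h\<in>insert (\<lambda>w. 0) B. \<forall>w. a w \<le> h w"
  shows "B \<in> K"
proof -
  obtain F where F: "\<forall>gs\<in>PiE {..<n} As.
      F gs \<in> posi (gs ` {..<n}) \<and> (\<exists>h\<in>insert (\<lambda>w. 0) B. \<forall>w. F gs w \<le> h w)"
    using dom by (metis (no_types, lifting) bchoice)
  have FK: "F ` PiE {..<n} As \<in> K"
    by (rule coherent_K_posi_selection[OF As]) (use F in blast)
  have "\<forall>a\<in>F ` PiE {..<n} As. \<exists>h. h \<in> insert (\<lambda>w. 0) B \<and> (\<forall>w. a w \<le> h w)"
    using F by blast
  then obtain G where G: "\<forall>a\<in>F ` PiE {..<n} As. G a \<in> insert (\<lambda>w. 0) B \<and> (\<forall>w. a w \<le> G a w)"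
    by (rule bchoice[elim_format]) blast
  have "insert (\<lambda>w. 0) B \<subseteq> gambles" using B zero_in_gambles by blast
  then have "G ` F ` PiE {..<n} As \<in> K"
    using G by (intro coherent_K_dominate[OF FK]) auto
  then have "G ` F ` PiE {..<n} As - {\<lambda>w. 0} \<in> K"
    by (rule coherent_K_remove_zero)
  moreover have "G ` F ` PiE {..<n} As - {\<lambda>w. 0} \<subseteq> B"
    using G by blast
  ultimately show ?thesis using B by (rule coherent_K_superset)
qed

lemma coherent_K_separation_indexed:
  fixes n :: nat
  assumes As: "\<forall>i<n. As i \<in> K" and B: "B \<subseteq> gambles" "B \<notin> K"
  shows "\<exists>D. coherent_D D \<and> (\<forall>i<n. As i \<inter> D \<noteq> {}) \<and> B \<inter> D = {}"
proof (rule ccontr)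
  assume no_sep: "\<nexists>D. coherent_D D \<and> (\<forall>i<n. As i \<inter> D \<noteq> {}) \<and> B \<inter> D = {}"
  have B_not_pos: "g \<notin> posgambles" if "g \<in> B" for g
    using that coherent_K_superset[OF coherent_K_posgamble, of g B] B by blast
  have "\<exists>a\<in>posi (gs ` {..<n}). \<exists>h\<in>insert (\<lambda>w. 0) B. \<forall>w. a w \<le> h w"
    if gs: "gs \<in> PiE {..<n} As" for gs
  proof -
    obtain h where h: "h \<in> insert (\<lambda>w. 0) B" "h \<in> natext gs n"
    proof (cases "(\<lambda>w. 0) \<in> natext gs n")
      case False
      have "\<forall>i<n. gs i \<in> gambles"
        using gs As coherent_K_subset_gambles by (auto simp: PiE_def Pi_def)
      with False have "coherent_D (natext gs n)" by (rule coherent_natext[rotated])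
      moreover have "\<forall>i<n. As i \<inter> natext gs n \<noteq> {}"
        using generator_in_natext[of _ n gs] gs by (auto simp: PiE_def Pi_def)
      ultimately have "B \<inter> natext gs n \<noteq> {}" using no_sep by blast
      then show thesis using that by blast
    qed (use that in blast)
    have "h \<notin> posgambles"
      using h(1) B_not_pos zero_notin_posgambles by blast
    then obtain a where a: "a \<in> posi (gs ` {..<n})" "\<forall>w. a w \<le> h w"
      using natext_dominates_posi[OF h(2)] by blast
    show ?thesis
      by (rule bexI[where x = a], rule bexI[where x = h]) (use a h(1) in auto)
  qed
  then have "B \<in> K" by (rule coherent_K_mem_if_posi_dominated[OF As B(1), rule_format])
  with B(2) show False by contradiction
qed

lemma coherent_K_separation:
  assumes "finite S" "S \<subseteq> K" "B \<subseteq> gambles" "B \<notin> K"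
  shows "\<exists>D. coherent_D D \<and> (\<forall>A\<in>S. A \<inter> D \<noteq> {}) \<and> B \<inter> D = {}"
proof -
  obtain f where f: "bij_betw f {..<card S} S"
    using ex_bij_betw_nat_finite[OF assms(1)] by (auto simp: atLeast0LessThan)
  then have "\<forall>i<card S. f i \<in> K" using assms(2) by (auto dest: bij_betw_apply)
  then obtain D where D: "coherent_D D" "\<forall>i<card S. f i \<inter> D \<noteq> {}" "B \<inter> D = {}"
    by (elim coherent_K_separation_indexed[OF _ assms(3,4), THEN exE]) blast
  have "A \<inter> D \<noteq> {}" if "A \<in> S" for A
  proof -
    obtain i where "i < card S" "A = f i"
      using f \<open>A \<in> S\<close> by (auto simp: bij_betw_def)
    then show ?thesis using D(2) by blast
  qed
  with D show ?thesis by blast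
qed

end

subsection \<open>Representation by families of coherent sets of desirable gambles\<close>

definition finitely_meets :: "('w \<Rightarrow> real) set set set \<Rightarrow> ('w \<Rightarrow> real) set \<Rightarrow> bool" where
  "finitely_meets \<D> B \<longleftrightarrow>
    (\<exists>\<F>. \<F> \<subseteq> \<D> \<and> finite \<F> \<and> \<F> \<noteq> {} \<and> (\<forall>D\<in>\<Inter>\<F>. B \<inter> D \<noteq> {}))"

definition fip_representation ::
    "('w \<Rightarrow> real) set set set \<Rightarrow> ('w \<Rightarrow> real) set set \<Rightarrow> bool" where
  "fip_representation \<D> K \<longleftrightarrow>
       \<D> \<noteq> {}
     \<and> (\<forall>\<E>\<in>\<D>. \<E> \<noteq> {} \<and> (\<forall>D\<in>\<E>. coherent_D D))
     \<and> (\<forall>\<F>. \<F> \<subseteq> \<D> \<and> finite \<F> \<and> \<F> \<noteq> {} \<longrightarrow> \<Inter>\<F> \<noteq> {})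
     \<and> (\<forall>B. B \<subseteq> gambles \<longrightarrow> (B \<in> K \<longleftrightarrow> finitely_meets \<D> B))"

lemma finitely_meets_image_iff:
  "finitely_meets (f ` K) B \<longleftrightarrow> (\<exists>S. S \<subseteq> K \<and> finite S \<and> S \<noteq> {} \<and> (\<forall>D\<in>\<Inter>(f ` S). B \<inter> D \<noteq> {}))"
  unfolding finitely_meets_def
proof
  assume "\<exists>\<F>. \<F> \<subseteq> f ` K \<and> finite \<F> \<and> \<F> \<noteq> {} \<and> (\<forall>D\<in>\<Inter>\<F>. B \<inter> D \<noteq> {})"
  then obtain \<F> where \<F>: "\<F> \<subseteq> f ` K" "finite \<F>" "\<F> \<noteq> {}" "\<forall>D\<in>\<Inter>\<F>. B \<inter> D \<noteq> {}"
    by blast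
  then obtain S where "S \<subseteq> K" "finite S" "\<F> = f ` S"
    using finite_subset_image[of \<F> f K] by blast
  with \<F>(3,4) show "\<exists>S. S \<subseteq> K \<and> finite S \<and> S \<noteq> {} \<and> (\<forall>D\<in>\<Inter>(f ` S). B \<inter> D \<noteq> {})"
    by blast
next
  assume "\<exists>S. S \<subseteq> K \<and> finite S \<and> S \<noteq> {} \<and> (\<forall>D\<in>\<Inter>(f ` S). B \<inter> D \<noteq> {})"
  then obtain S where "S \<subseteq> K" "finite S" "S \<noteq> {}" "\<forall>D\<in>\<Inter>(f ` S). B \<inter> D \<noteq> {}"
    by blast
  then show "\<exists>\<F>. \<F> \<subseteq> f ` K \<and> finite \<F> \<and> \<F> \<noteq> {} \<and> (\<forall>D\<in>\<Inter>\<F>. B \<inter> D \<noteq> {})"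
    by (intro exI[of _ "f ` S"]) auto
qed

definition coherent_meeting :: "('w \<Rightarrow> real) set \<Rightarrow> ('w \<Rightarrow> real) set set" where
  "coherent_meeting A = {D. coherent_D D \<and> A \<inter> D \<noteq> {}}"

lemma Inter_coherent_meeting:
  "S \<noteq> {} \<Longrightarrow> \<Inter>(coherent_meeting ` S) = {D. coherent_D D \<and> (\<forall>A\<in>S. A \<inter> D \<noteq> {})}"
  by (auto simp: coherent_meeting_def)

lemma coherent_K_imp_fip_representation:
  assumes K: "coherent_K K"
  shows "fip_representation (coherent_meeting ` K) K"
proof -
  have Inter_nonempty: "\<Inter>(coherent_meeting ` S) \<noteq> {}" if S: "S \<subseteq> K" "finite S" "S \<noteq> {}" for S
  proof -
    obtain D where "coherent_D D" "\<forall>A\<in>S. A \<inter> D \<noteq> {}"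
      using coherent_K_separation[OF K S(2,1) empty_subsetI coherent_K_empty[OF K]] by blast
    then show ?thesis using Inter_coherent_meeting[OF S(3)] by blast
  qed
  have mem: "B \<in> K \<longleftrightarrow> finitely_meets (coherent_meeting ` K) B" if B: "B \<subseteq> gambles" for B
  proof
    assume "B \<in> K"
    then show "finitely_meets (coherent_meeting ` K) B"
      unfolding finitely_meets_image_iff
      by (intro exI[of _ "{B}"]) (auto simp: coherent_meeting_def)
  next
    assume "finitely_meets (coherent_meeting ` K) B"
    then obtain S where S: "S \<subseteq> K" "finite S" "S \<noteq> {}"
        "\<forall>D\<in>\<Inter>(coherent_meeting ` S). B \<inter> D \<noteq> {}"
      unfolding finitely_meets_image_iff by blast
    then have "B \<inter> D \<noteq> {}" if "coherent_D D" "\<forall>A\<in>S. A \<inter> D \<noteq> {}" for D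
      using Inter_coherent_meeting[OF S(3)] that by blast
    then show "B \<in> K" using coherent_K_separation[OF K S(2,1) B] by blast
  qed
  show ?thesis
    unfolding fip_representation_def
  proof (intro conjI allI impI ballI)
    show "coherent_meeting ` K \<noteq> {}"
      using coherent_K_posgamble[OF K one_in_posgambles] by blast
    show "\<E> \<noteq> {}" if "\<E> \<in> coherent_meeting ` K" for \<E>
      using that Inter_nonempty[of "{_}"] by auto
    show "coherent_D D" if "\<E> \<in> coherent_meeting ` K" "D \<in> \<E>" for \<E> D
      using that by (auto simp: coherent_meeting_def)
    show "\<Inter>\<F> \<noteq> {}" if "\<F> \<subseteq> coherent_meeting ` K \<and> finite \<F> \<and> \<F> \<noteq> {}" for \<F>
      using that Inter_nonempty finite_subset_image[of \<F> coherent_meeting K] by blast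
  qed (rule mem)
qed

context
  fixes \<D> :: "('w \<Rightarrow> real) set set set"
  assumes coh: "\<forall>\<E>\<in>\<D>. \<forall>D\<in>\<E>. coherent_D D"
begin

lemma finitely_meets_transfer:
  assumes "finitely_meets \<D> A" and meets: "\<And>D. coherent_D D \<Longrightarrow> A \<inter> D \<noteq> {} \<Longrightarrow> B \<inter> D \<noteq> {}"
  shows "finitely_meets \<D> B"
proof -
  obtain \<F> where \<F>: "\<F> \<subseteq> \<D>" "finite \<F>" "\<F> \<noteq> {}" "\<forall>D\<in>\<Inter>\<F>. A \<inter> D \<noteq> {}"
    using assms(1) unfolding finitely_meets_def by blast
  have "\<forall>D\<in>\<Inter>\<F>. coherent_D D" using \<F>(1,3) coh by blast
  with \<F>(4) have "\<forall>D\<in>\<Inter>\<F>. B \<inter> D \<noteq> {}" using meets by blast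
  with \<F>(1-3) show ?thesis unfolding finitely_meets_def by blast
qed

lemma finitely_meets_posgamble:
  assumes "\<D> \<noteq> {}" "g \<in> posgambles"
  shows "finitely_meets \<D> {g}"
proof -
  obtain \<E> where "\<E> \<in> \<D>" using assms(1) by blast
  have "g \<in> D" if "D \<in> \<E>" for D
  proof -
    have "coherent_D D" using coh \<open>\<E> \<in> \<D>\<close> that by blast
    then show ?thesis using posgambles_subset_coherent_D assms(2) by blast
  qed
  then have "\<forall>D\<in>\<Inter>{\<E>}. {g} \<inter> D \<noteq> {}" by blast
  with \<open>\<E> \<in> \<D>\<close> show ?thesis
    unfolding finitely_meets_def by (intro exI[of _ "{\<E>}"]) auto
qed

lemma finitely_meets_posi_selection:
  fixes n :: nat
  assumes "\<D> \<noteq> {}" and As: "\<forall>i<n. finitely_meets \<D> (As i)"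
    and F: "\<forall>gs\<in>PiE {..<n} As. F gs \<in> posi (gs ` {..<n})"
  shows "finitely_meets \<D> (F ` PiE {..<n} As)"
proof -
  have "\<forall>i\<in>{..<n}. \<exists>\<F>. \<F> \<subseteq> \<D> \<and> finite \<F> \<and> \<F> \<noteq> {} \<and> (\<forall>D\<in>\<Inter>\<F>. As i \<inter> D \<noteq> {})"
    using As unfolding finitely_meets_def by blast
  then obtain \<F>s where \<F>s: "\<forall>i\<in>{..<n}. \<F>s i \<subseteq> \<D> \<and> finite (\<F>s i) \<and> \<F>s i \<noteq> {}
      \<and> (\<forall>D\<in>\<Inter>(\<F>s i). As i \<inter> D \<noteq> {})"
    by (rule bchoice[elim_format]) blast
  obtain \<E> where "\<E> \<in> \<D>" using assms(1) by blast
  define \<F> where "\<F> = insert \<E> (\<Union>i<n. \<F>s i)"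
  have \<F>: "\<F> \<subseteq> \<D>" "finite \<F>" "\<F> \<noteq> {}"
    using \<F>s \<open>\<E> \<in> \<D>\<close> by (auto simp: \<F>_def)
  have meets: "F ` PiE {..<n} As \<inter> D \<noteq> {}" if D: "D \<in> \<Inter>\<F>" for D
  proof -
    have "coherent_D D" using D \<F>(1,3) coh by blast
    moreover have "\<forall>i<n. As i \<inter> D \<noteq> {}"
      using D \<F>s by (auto simp: \<F>_def)
    ultimately show ?thesis by (rule coherent_D_meets_posi_selection[OF _ _ F])
  qed
  show ?thesis
    unfolding finitely_meets_def by (intro exI[of _ \<F>] conjI ballI meets \<F>)
qed

end

lemma fip_representation_imp_coherent_K:
  fixes K :: "('w \<Rightarrow> real) set set"
  assumes K: "K \<subseteq> Pow gambles" and rep: "fip_representation \<D> K"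
  shows "coherent_K K"
proof -
  have "\<D> \<noteq> {}" and coh_rep: "\<forall>\<E>\<in>\<D>. \<E> \<noteq> {} \<and> (\<forall>D\<in>\<E>. coherent_D D)"
    and fip: "\<forall>\<F>. \<F> \<subseteq> \<D> \<and> finite \<F> \<and> \<F> \<noteq> {} \<longrightarrow> \<Inter>\<F> \<noteq> {}"
    and mem_rep: "\<forall>B. B \<subseteq> gambles \<longrightarrow> (B \<in> K \<longleftrightarrow> finitely_meets \<D> B)"
    using rep unfolding fip_representation_def by simp_all
  have coh: "\<forall>\<E>\<in>\<D>. \<forall>D\<in>\<E>. coherent_D D" using coh_rep by blast
  have mem: "B \<in> K \<longleftrightarrow> finitely_meets \<D> B" if "B \<subseteq> gambles" for B
    using mem_rep that by blast
  have K_meets: "finitely_meets \<D> A" if "A \<in> K" for A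
    using mem that K by blast
  have transfer: "B \<in> K"
    if "A \<in> K" "B \<subseteq> gambles" "\<And>D. coherent_D D \<Longrightarrow> A \<inter> D \<noteq> {} \<Longrightarrow> B \<inter> D \<noteq> {}" for A B
    using finitely_meets_transfer[OF coh K_meets[OF that(1)] that(3)] mem[OF that(2)] by blast
  show ?thesis
    unfolding coherent_K_def
  proof (intro conjI ballI allI impI; (elim conjE)?)
    show "K \<subseteq> Pow gambles" by fact
    show "{} \<notin> K"
    proof
      assume "{} \<in> K"
      then obtain \<F> where "\<F> \<subseteq> \<D>" "finite \<F>" "\<F> \<noteq> {}" "\<forall>D\<in>\<Inter>\<F>. {} \<inter> D \<noteq> {}"
        using K_meets[OF \<open>{} \<in> K\<close>] unfolding finitely_meets_def by blast
      moreover from this have "\<Inter>\<F> = {}" by blast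
      ultimately show False using fip by blast
    qed
  next
    fix A assume "A \<in> K"
    then show "A - {\<lambda>w. 0} \<in> K"
      by (rule transfer) (use \<open>A \<in> K\<close> K in \<open>auto simp: coherent_D_def\<close>)
  next
    fix g :: "'w \<Rightarrow> real"
    assume g: "g \<in> posgambles"
    then have "{g} \<subseteq> gambles" by (simp add: posgambles_def)
    then show "{g} \<in> K"
      using mem finitely_meets_posgamble[OF coh \<open>\<D> \<noteq> {}\<close> g] by blast
  next
    fix A B assume "A \<in> K" "A \<subseteq> B" "B \<subseteq> gambles"
    then show "B \<in> K" using transfer by blast
  next
    fix A F assume "A \<in> K" and F: "\<forall>g\<in>A. F g \<in> gambles \<and> (\<forall>w. F g w \<ge> g w)"
    show "F ` A \<in> K"
    proof (rule transfer[OF \<open>A \<in> K\<close>])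
      show "F ` A \<subseteq> gambles" using F by blast
    next
      fix D assume D: "coherent_D D" "A \<inter> D \<noteq> {}"
      then obtain g where "g \<in> A" "g \<in> D" by blast
      then have "F g \<in> D" using coherent_D_upward[OF D(1)] F by blast
      with \<open>g \<in> A\<close> show "F ` A \<inter> D \<noteq> {}" by blast
    qed
  next
    fix n :: nat and As :: "nat \<Rightarrow> ('w \<Rightarrow> real) set" and F :: "(nat \<Rightarrow> 'w \<Rightarrow> real) \<Rightarrow> 'w \<Rightarrow> real"
    assume As: "\<forall>i<n. As i \<in> K" and F: "\<forall>gs\<in>PiE {..<n} As. F gs \<in> posi (gs ` {..<n})"
    have gambles: "F ` PiE {..<n} As \<subseteq> gambles"
    proof
      fix f assume "f \<in> F ` PiE {..<n} As"
      then obtain gs where gs: "gs \<in> PiE {..<n} As" "f = F gs" by blast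
      then have "gs ` {..<n} \<subseteq> gambles"
        using As K by (auto simp: PiE_def Pi_def)
      then show "f \<in> gambles" using posi_subset_gambles F gs by blast
    qed
    have "\<forall>i<n. finitely_meets \<D> (As i)" using As K_meets by blast
    then have "finitely_meets \<D> (F ` PiE {..<n} As)"
      by (rule finitely_meets_posi_selection[OF coh \<open>\<D> \<noteq> {}\<close> _ F])
    then show "F ` PiE {..<n} As \<in> K" using mem[OF gambles] by blast
  qed
qed

theorem mainTheorem12:
  fixes K :: "('w \<Rightarrow> real) set set"
  assumes "K \<subseteq> Pow gambles"
  shows "coherent_K K \<longleftrightarrow>
    (\<exists>\<D> :: ('w \<Rightarrow> real) set set set.
       \<D> \<noteq> {}
     \<and> (\<forall>\<E>\<in>\<D>. \<E> \<noteq> {} \<and> (\<forall>D\<in>\<E>. coherent_D D))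
     \<and> (\<forall>\<F>. \<F> \<subseteq> \<D> \<and> finite \<F> \<and> \<F> \<noteq> {} \<longrightarrow> \<Inter>\<F> \<noteq> {})
     \<and> (\<forall>B. B \<subseteq> gambles \<longrightarrow>
          (B \<in> K \<longleftrightarrow>
            (\<exists>\<F>. \<F> \<subseteq> \<D> \<and> finite \<F> \<and> \<F> \<noteq> {} \<and>
                 (\<forall>D\<in>\<Inter>\<F>. B \<inter> D \<noteq> {})))))"
proof -
  have "coherent_K K \<longleftrightarrow> (\<exists>\<D>. fip_representation \<D> K)"
    using coherent_K_imp_fip_representation fip_representation_imp_coherent_K[OF assms] by blast
  then show ?thesis by (simp only: fip_representation_def finitely_meets_def)
qed

end
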